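(* Let $G=(V,E,\partial)$ be a finite discrete graph with standard weights ($w_e=1$) and no magnetic potential, let $V_0\subseteq V$ and let $V_1\subsetneq V_0$ be a proper subset. For any two different $s$-partitions $A$ and $B$ of a natural number $r\ge4$, the equilateral metric graphs $\mathcal F_{A,V_1}$ and $\mathcal F_{B,V_1}$ associated with the discrete $V_1$-contracted frame unions $F_{A,V_1}(G,V_0)$ and $F_{B,V_1}(G,V_0)$ are isospectral (for the Kirchhoff Laplacian) and not isomorphic.
   Context: A graph $G=(V,E,\partial)$: finite disjoint sets $V,E$, incidence $\partial e=(\partial_-e,\partial_+e)$, inversion $e\mapsto\bar e$ ($\bar{\bar e}=e$, $\bar e\ne e$, $\partial_\pm\bar e=\partial_\mp e$); loops/multiple edges allowed; every vertex has positive degree. Contraction of vertices along an equivalence relation keeps all edges and replaces vertices by classes. Frame member: $G^a$ is the disjoint union of $a$ copies $G\times\{j\}$; with $(v,i)\sim(v',j)$ iff $(v,i)=(v',j)$ or ($v=v'\in V_0$), $F_a(G,V_0)=G^a/\!\sim$. An $s$-partition of $r$ is a multiset $A=\{\!\{a_1,\dots,a_s\}\!\}$ of natural numbers with sum $r$; $F_A=\bigsqcup_{i=1}^sF_{a_i}(G,V_0)\times\{i\}$, and $F_{A,V_1}$ is obtained from $F_A$ by contracting, for each $v_1\in V_1$, the $s$ vertices $([v_1],i)$ into one vertex. The equilateral metric graph $\mathcal G$ of a discrete graph: choose one edge from each pair $\{e,\bar e\}$, replace it by a copy of $[0,1]$, and glue the endpoints $0,1$ of the copy of $e$ to $\partial_-e,\partial_+e$.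 The Kirchhoff Laplacian acts as $-f_e''$ on each edge, on functions in $H^2$ on each edge that are continuous at every vertex and satisfy $\sum_{e\in E_v}f_e'(0)=0$ (derivatives taken outward from $v$) at every vertex $v$. Isospectral means the eigenvalues agree with multiplicity. *)

theory Defs
  imports Complex_Main "HOL-Library.Multiset"
begin

record ('v, 'e) dgraph =
  gV   :: "'v set"
  gE   :: "'e set"
  gsrc :: "'e \<Rightarrow> 'v"
  gtgt :: "'e \<Rightarrow> 'v"
  ginv :: "'e \<Rightarrow> 'e"

definition is_dgraph :: "('v, 'e) dgraph \<Rightarrow> bool" where
  "is_dgraph G \<longleftrightarrow>
     finite (gV G) \<and> finite (gE G) \<and>
     (\<forall>e\<in>gE G. gsrc G e \<in> gV G \<and> gtgt G e \<in> gV G) \<and>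
     (\<forall>e\<in>gE G. ginv G e \<in> gE G \<and> ginv G (ginv G e) = e \<and> ginv G e \<noteq> e \<and>
                 gsrc G (ginv G e) = gtgt G e \<and> gtgt G (ginv G e) = gsrc G e) \<and>
     (\<forall>v\<in>gV G. \<exists>e\<in>gE G. gsrc G e = v)"

definition contract :: "('v, 'e) dgraph \<Rightarrow> ('v \<times> 'v) set \<Rightarrow> ('v set, 'e) dgraph" where
  "contract G R = \<lparr> gV = gV G // R, gE = gE G,
                    gsrc = (\<lambda>e. R `` {gsrc G e}), gtgt = (\<lambda>e. R `` {gtgt G e}),
                    ginv = ginv G \<rparr>"

definition gpow :: "('v, 'e) dgraph \<Rightarrow> nat \<Rightarrow> ('v \<times> nat, 'e \<times> nat) dgraph" where
  "gpow G a = \<lparr> gV = gV G \<times> {1..a}, gE = gE G \<times> {1..a},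
                gsrc = (\<lambda>(e, j). (gsrc G e, j)), gtgt = (\<lambda>(e, j). (gtgt G e, j)),
                ginv = (\<lambda>(e, j). (ginv G e, j)) \<rparr>"

definition frame_rel :: "('v, 'e) dgraph \<Rightarrow> 'v set \<Rightarrow> nat \<Rightarrow> (('v \<times> nat) \<times> ('v \<times> nat)) set" where
  "frame_rel G V0 a = {((v, i), (v', j)).
      (v, i) \<in> gV G \<times> {1..a} \<and> (v', j) \<in> gV G \<times> {1..a} \<and>
      ((v, i) = (v', j) \<or> (v = v' \<and> v \<in> V0))}"

definition frame :: "('v, 'e) dgraph \<Rightarrow> 'v set \<Rightarrow> nat \<Rightarrow> (('v \<times> nat) set, 'e \<times> nat) dgraph" where
  "frame G V0 a = contract (gpow G a) (frame_rel G V0 a)"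

definition frame_class :: "('v, 'e) dgraph \<Rightarrow> 'v set \<Rightarrow> nat \<Rightarrow> 'v \<Rightarrow> ('v \<times> nat) set" where
  "frame_class G V0 a v = frame_rel G V0 a `` {(v, 1)}"

text \<open>Frame union F_A = disjoint union of F_{a_i}(G,V0) \<times> {i}, i = 1..s, where the
  s-partition A = {{a_1,...,a_s}} is given by an enumeration as = [a_1, ..., a_s].\<close>

definition frame_union :: "('v, 'e) dgraph \<Rightarrow> 'v set \<Rightarrow> nat list
    \<Rightarrow> (('v \<times> nat) set \<times> nat, ('e \<times> nat) \<times> nat) dgraph" where
  "frame_union G V0 as = \<lparr>
     gV = (\<Union>i\<in>{1..length as}. gV (frame G V0 (as ! (i - 1))) \<times> {i}),
     gE = (\<Union>i\<in>{1..length as}. gE (frame G V0 (as ! (i - 1))) \<times> {i}),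
     gsrc = (\<lambda>(e, i). (gsrc (frame G V0 (as ! (i - 1))) e, i)),
     gtgt = (\<lambda>(e, i). (gtgt (frame G V0 (as ! (i - 1))) e, i)),
     ginv = (\<lambda>(e, i). (ginv (frame G V0 (as ! (i - 1))) e, i)) \<rparr>"

definition v1_rel :: "('v, 'e) dgraph \<Rightarrow> 'v set \<Rightarrow> 'v set \<Rightarrow> nat list
    \<Rightarrow> ((('v \<times> nat) set \<times> nat) \<times> (('v \<times> nat) set \<times> nat)) set" where
  "v1_rel G V0 V1 as = {((x, i), (y, k)).
      (x, i) \<in> gV (frame_union G V0 as) \<and> (y, k) \<in> gV (frame_union G V0 as) \<and>
      ((x, i) = (y, k) \<or>
       (\<exists>v1\<in>V1. x = frame_class G V0 (as ! (i - 1)) v1 \<and> y = frame_class G V0 (as ! (k - 1)) v1))}"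

definition frame_union_contr :: "('v, 'e) dgraph \<Rightarrow> 'v set \<Rightarrow> 'v set \<Rightarrow> nat list
    \<Rightarrow> ((('v \<times> nat) set \<times> nat) set, ('e \<times> nat) \<times> nat) dgraph" where
  "frame_union_contr G V0 V1 as = contract (frame_union G V0 as) (v1_rel G V0 V1 as)"

definition is_s_partition :: "nat \<Rightarrow> nat \<Rightarrow> nat list \<Rightarrow> bool" where
  "is_s_partition s r as \<longleftrightarrow> length as = s \<and> sum_list as = r \<and> (\<forall>a\<in>set as. 0 < a)"

text \<open>A function on the equilateral metric graph of G is described by one function
  f e on [0,1] for every oriented edge e, with f (bar e) t = f e (1 - t)
  (so the copy of e is parametrised from \<partial>_- e at 0 to \<partial>_+ e at 1).
  f is an eigenfunction of the Kirchhoff Laplacian for the eigenvalue lam iff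
  -f_e'' = lam f_e on each edge, f is continuous at each vertex, and
  sum_{e \<in> E_v} f_e'(0) = 0 with E_v = {e. \<partial>_- e = v} (outward derivatives).\<close>

definition kirchhoff_eigenfun :: "('v, 'e) dgraph \<Rightarrow> real \<Rightarrow> ('e \<Rightarrow> real \<Rightarrow> real) \<Rightarrow> bool" where
  "kirchhoff_eigenfun G lam f \<longleftrightarrow>
     (\<forall>e\<in>gE G. \<forall>t\<in>{0..1}. f (ginv G e) t = f e (1 - t)) \<and>
     (\<exists>\<phi> :: 'v \<Rightarrow> real. \<forall>e\<in>gE G. f e 0 = \<phi> (gsrc G e) \<and> f e 1 = \<phi> (gtgt G e)) \<and>
     (\<exists>f1 f2 :: 'e \<Rightarrow> real \<Rightarrow> real.
        (\<forall>e\<in>gE G. \<forall>t\<in>{0..1}.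
            (f e has_real_derivative f1 e t) (at t within {0..1}) \<and>
            (f1 e has_real_derivative f2 e t) (at t within {0..1}) \<and>
            - f2 e t = lam * f e t) \<and>
        (\<forall>v\<in>gV G. (\<Sum>e\<in>{e\<in>gE G. gsrc G e = v}. f1 e 0) = 0))"

definition kirchhoff_mult_ge :: "('v, 'e) dgraph \<Rightarrow> real \<Rightarrow> nat \<Rightarrow> bool" where
  "kirchhoff_mult_ge G lam n \<longleftrightarrow>
     (\<exists>fs :: nat \<Rightarrow> 'e \<Rightarrow> real \<Rightarrow> real.
        (\<forall>i<n. kirchhoff_eigenfun G lam (fs i)) \<and>
        (\<forall>c :: nat \<Rightarrow> real.
            (\<forall>e\<in>gE G. \<forall>t\<in>{0..1}. (\<Sum>i<n. c i * fs i e t) = 0) \<longrightarrow> (\<forall>i<n. c i = 0)))"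

definition metric_isospectral :: "('v, 'e) dgraph \<Rightarrow> ('w, 'f) dgraph \<Rightarrow> bool" where
  "metric_isospectral G H \<longleftrightarrow> (\<forall>lam n. kirchhoff_mult_ge G lam n \<longleftrightarrow> kirchhoff_mult_ge H lam n)"

text \<open>Isomorphism of the equilateral metric graphs (all lengths 1): a bijection of
  vertices and of edges preserving incidence and inversion.\<close>

definition metric_graph_iso :: "('v, 'e) dgraph \<Rightarrow> ('w, 'f) dgraph \<Rightarrow> bool" where
  "metric_graph_iso G H \<longleftrightarrow>
     (\<exists>\<phi> \<psi>. bij_betw \<phi> (gV G) (gV H) \<and> bij_betw \<psi> (gE G) (gE H) \<and>
        (\<forall>e\<in>gE G. gsrc H (\<psi> e) = \<phi> (gsrc G e) \<and> gtgt H (\<psi> e) = \<phi> (gtgt G e) \<and>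
                   ginv H (\<psi> e) = \<psi> (ginv G e)))"

end

theory Submission
  imports Defs
begin

text \<open>An edge of \<open>F\<^sub>A\<^sub>,\<^sub>V\<^sub>1\<close> is an edge \<open>e\<close> of \<open>G\<close> together with a copy index
  \<open>(i, j)\<close>, \<open>j \<le> a\<^sub>i\<close>. The copies of a vertex \<open>u\<close> that are glued together are all
  copies if \<open>u \<in> V\<^sub>1\<close>, the copies within one frame member if \<open>u \<in> V\<^sub>0 - V\<^sub>1\<close>, and
  no others otherwise.

  Isospectrality: a linear map from functions on the copies of \<open>A\<close> to functions on the
  copies of \<open>B\<close>, applied edgewise, maps Kirchhoff eigenfunctions to Kirchhoff
  eigenfunctions as soon as it maps functions that are constant, resp. have vanishing sum, on
  each of these three kinds of classes to functions of the same kind; if it is injective it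
  transfers multiplicities. Such a transplantation exists whenever \<open>A\<close> and \<open>B\<close> have the
  same number of parts and the same sum: keep the mean, rescale the block means and move the
  deviations within blocks by a bijection between all but the last copies of every block.

  Non-isomorphism: count the oriented edges whose source has degree \<open>d\<close>. An edge of a frame
  member \<open>F\<^sub>a\<close> starting at \<open>u \<in> V\<^sub>0 - V\<^sub>1\<close> has source degree \<open>deg u * a\<close>, so these
  counts determine the sums \<open>\<Sum>a\<in>A. a * h\<^sub>d(a)\<close>, and choosing \<open>d\<close> as the largest degree
  in \<open>V\<^sub>0 - V\<^sub>1\<close> times the largest part where the multiplicities in \<open>A\<close> and \<open>B\<close> differ
  separates \<open>A\<close> from \<open>B\<close>.\<close>

section \<open>Copies and gluing\<close>

definition copies :: "nat list \<Rightarrow> (nat \<times> nat) set" where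
  "copies as = (SIGMA i:{1..length as}. {1..as ! (i - 1)})"

text \<open>The edge \<open>copy_edge e (i, j)\<close> of the frame union is the copy of \<open>e\<close> in the
  \<open>j\<close>-th copy of \<open>G\<close> inside the \<open>i\<close>-th frame member.\<close>

definition copy_edge :: "'e \<Rightarrow> nat \<times> nat \<Rightarrow> ('e \<times> nat) \<times> nat" where
  "copy_edge e p = ((e, snd p), fst p)"

text \<open>The copies \<open>p\<close> and \<open>p'\<close> of the vertex \<open>u\<close> become one vertex of \<open>F\<^sub>A\<^sub>,\<^sub>V\<^sub>1\<close>.\<close>

definition glued :: "'v set \<Rightarrow> 'v set \<Rightarrow> 'v \<Rightarrow> nat \<times> nat \<Rightarrow> nat \<times> nat \<Rightarrow> bool" where
  "glued V0 V1 u p p' \<longleftrightarrow> u \<in> V1 \<or> fst p = fst p' \<and> (u \<in> V0 \<or> p = p')"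

lemma copy_edge_eq_iff [simp]: "copy_edge e p = copy_edge e' p' \<longleftrightarrow> e = e' \<and> p = p'"
  by (cases p; cases p') (auto simp: copy_edge_def)

lemma inj_on_copy_edge: "inj_on (\<lambda>(e, p). copy_edge e p) X"
  by (auto simp: inj_on_def)

lemma finite_copies [simp]: "finite (copies as)"
  by (simp add: copies_def)

definition inner_copies :: "nat list \<Rightarrow> (nat \<times> nat) set" where
  "inner_copies as = (SIGMA i:{1..length as}. {1..<as ! (i - 1)})"

lemma inner_copies_subset: "inner_copies as \<subseteq> copies as"
  unfolding inner_copies_def copies_def by auto

lemma sum_copies: "(\<Sum>p\<in>copies as. f p) = (\<Sum>i\<in>{1..length as}. \<Sum>j\<in>{1..as ! (i - 1)}. f (i, j))"
  unfolding copies_def by (subst sum.Sigma) auto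

lemma sum_copies_block:
  assumes "l \<in> {1..length as}"
  shows "(\<Sum>p\<in>{p \<in> copies as. fst p = l}. f p) = (\<Sum>j\<in>{1..as ! (l - 1)}. f (l, j))"
proof -
  have "{p \<in> copies as. fst p = l} = Pair l ` {1..as ! (l - 1)}"
    using assms unfolding copies_def by auto
  then show ?thesis by (simp add: sum.reindex inj_on_def)
qed

lemma sum_nth_eq_sum_list: "(\<Sum>i\<in>{1..length as}. f (as ! (i - 1))) = sum_list (map f as)"
proof -
  have "(\<Sum>i\<in>{1..length as}. f (as ! (i - 1))) = (\<Sum>i<length as. f (as ! i))"
    by (rule sum.reindex_bij_witness[of _ Suc "\<lambda>i. i - 1"]) auto
  then show ?thesis by (simp add: sum_list_sum_nth atLeast0LessThan)
qed

lemma card_copies: "card (copies as) = sum_list as"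
  using sum_nth_eq_sum_list[where f = "\<lambda>a. a"] by (simp add: copies_def)

lemma card_inner_copies:
  assumes "\<forall>a\<in>set as. 0 < a"
  shows "card (inner_copies as) + length as = sum_list as"
proof -
  have "card (inner_copies as) = (\<Sum>i\<in>{1..length as}. as ! (i - 1) - 1)"
    by (simp add: inner_copies_def)
  also have "\<dots> = sum_list (map (\<lambda>a. a - 1) as)"
    by (rule sum_nth_eq_sum_list)
  moreover have "sum_list (map (\<lambda>a. a - 1) as) + length as = sum_list as"
    using assms by (induction as) auto
  ultimately show ?thesis by simp
qed

lemma glued_class:
  assumes "p \<in> copies as"
  shows "{p' \<in> copies as. glued V0 V1 u p p'} =
    (if u \<in> V1 then copies as else if u \<in> V0 then {p' \<in> copies as. fst p' = fst p} else {p})"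
  using assms by (auto simp: glued_def)

section \<open>The contracted frame union\<close>

locale frame_data =
  fixes G :: "('v, 'e) dgraph" and V0 V1 :: "'v set"
  assumes dgraph: "is_dgraph G" and V0_subset: "V0 \<subseteq> gV G" and V1_subset: "V1 \<subseteq> V0"
begin

abbreviation FC :: "nat list \<Rightarrow> ((('v \<times> nat) set \<times> nat) set, ('e \<times> nat) \<times> nat) dgraph" where
  "FC as \<equiv> frame_union_contr G V0 V1 as"

lemma equiv_frame_rel: "equiv (gV G \<times> {1..a}) (frame_rel G V0 a)"
  unfolding equiv_def refl_on_def sym_def trans_def frame_rel_def by auto

lemma frame_rel_class_eq_iff:
  assumes "u \<in> gV G" "u' \<in> gV G" "j \<in> {1..a}" "j' \<in> {1..a}"
  shows "frame_rel G V0 a `` {(u, j)} = frame_rel G V0 a `` {(u', j')} \<longleftrightarrow>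
         u = u' \<and> (u \<in> V0 \<or> j = j')"
proof -
  have "(u, j) \<in> gV G \<times> {1..a}" "(u', j') \<in> gV G \<times> {1..a}" using assms by auto
  from eq_equiv_class_iff[OF equiv_frame_rel this] show ?thesis
    using assms by (auto simp: frame_rel_def)
qed

lemma frame_rel_class_eq_frame_class_iff:
  assumes "u \<in> gV G" "v \<in> gV G" "v \<in> V0" "j \<in> {1..a}"
  shows "frame_rel G V0 a `` {(u, j)} = frame_class G V0 a v \<longleftrightarrow> u = v"
  using frame_rel_class_eq_iff[of u v j a 1] assms by (auto simp: frame_class_def)

lemma gV_frame_union:
  "gV (frame_union G V0 as) =
   (\<Union>i\<in>{1..length as}. ((gV G \<times> {1..as ! (i - 1)}) // frame_rel G V0 (as ! (i - 1))) \<times> {i})"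
  by (simp add: frame_union_def frame_def contract_def gpow_def)

lemma copy_vertex_in_frame_union:
  assumes "u \<in> gV G" "p \<in> copies as"
  shows "(frame_rel G V0 (as ! (fst p - 1)) `` {(u, snd p)}, fst p) \<in> gV (frame_union G V0 as)"
  using assms unfolding gV_frame_union copies_def by (auto intro!: quotientI)

lemma gsrc_in_gV: "e \<in> gE G \<Longrightarrow> gsrc G e \<in> gV G"
  using dgraph by (auto simp: is_dgraph_def)

lemma ginv_in_gE: "e \<in> gE G \<Longrightarrow> ginv G e \<in> gE G"
  using dgraph by (auto simp: is_dgraph_def)

lemma gsrc_ginv: "e \<in> gE G \<Longrightarrow> gsrc G (ginv G e) = gtgt G e"
  using dgraph by (auto simp: is_dgraph_def)

lemma finite_gE: "finite (gE G)"
  using dgraph by (simp add: is_dgraph_def)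


lemma equiv_v1_rel:
  assumes pos: "\<forall>a\<in>set as. 0 < a"
  shows "equiv (gV (frame_union G V0 as)) (v1_rel G V0 V1 as)"
proof -
  have unique: "v = v'"
    if "(y, k) \<in> gV (frame_union G V0 as)" "v \<in> V1" "v' \<in> V1"
       "y = frame_class G V0 (as ! (k - 1)) v" "y = frame_class G V0 (as ! (k - 1)) v'" for y k v v'
  proof -
    have "k \<in> {1..length as}" using that(1) by (auto simp: gV_frame_union)
    then have "as ! (k - 1) > 0" using pos by auto
    then show ?thesis
      using frame_rel_class_eq_frame_class_iff[where u = v and v = v' and j = 1
          and a = "as ! (k - 1)"] that V1_subset V0_subset
      unfolding frame_class_def by auto
  qed
  show ?thesis
    unfolding equiv_def refl_on_def sym_def trans_def
  proof (intro conjI allI impI)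
    show "v1_rel G V0 V1 as \<subseteq> gV (frame_union G V0 as) \<times> gV (frame_union G V0 as)"
      "\<forall>x\<in>gV (frame_union G V0 as). (x, x) \<in> v1_rel G V0 V1 as"
      unfolding v1_rel_def by auto
    show "(y, x) \<in> v1_rel G V0 V1 as" if "(x, y) \<in> v1_rel G V0 V1 as" for x y
      using that unfolding v1_rel_def by auto
    show "(x, z) \<in> v1_rel G V0 V1 as"
      if "(x, y) \<in> v1_rel G V0 V1 as" "(y, z) \<in> v1_rel G V0 V1 as" for x y z
      using that unique[of "fst y" "snd y"] unfolding v1_rel_def by (cases x; cases y; cases z) auto
  qed
qed

lemma gE_FC: "gE (FC as) = (\<lambda>(e, p). copy_edge e p) ` (gE G \<times> copies as)"
  unfolding frame_union_contr_def contract_def frame_union_def frame_def gpow_def copies_def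
    copy_edge_def
  by (auto simp: image_iff)

lemma copy_edge_in_gE_FC [simp]: "copy_edge e p \<in> gE (FC as) \<longleftrightarrow> e \<in> gE G \<and> p \<in> copies as"
  unfolding gE_FC by auto

lemma gsrc_FC: "gsrc (FC as) (copy_edge e p) =
   v1_rel G V0 V1 as `` {(frame_rel G V0 (as ! (fst p - 1)) `` {(gsrc G e, snd p)}, fst p)}"
  unfolding frame_union_contr_def contract_def frame_union_def frame_def gpow_def copy_edge_def
  by simp

lemma gtgt_FC: "gtgt (FC as) (copy_edge e p) =
   v1_rel G V0 V1 as `` {(frame_rel G V0 (as ! (fst p - 1)) `` {(gtgt G e, snd p)}, fst p)}"
  unfolding frame_union_contr_def contract_def frame_union_def frame_def gpow_def copy_edge_def
  by simp

lemma ginv_FC: "ginv (FC as) (copy_edge e p) = copy_edge (ginv G e) p"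
  unfolding frame_union_contr_def contract_def frame_union_def frame_def gpow_def copy_edge_def
  by simp

lemma gE_FC_cases:
  assumes "x \<in> gE (FC as)"
  obtains e p where "x = copy_edge e p" "e \<in> gE G" "p \<in> copies as"
  using assms by (auto simp: gE_FC)

lemma gsrc_FC_in_gV:
  assumes "x \<in> gE (FC as)"
  shows "gsrc (FC as) x \<in> gV (FC as)"
proof -
  obtain e p where x: "x = copy_edge e p" "e \<in> gE G" "p \<in> copies as"
    using assms by (rule gE_FC_cases)
  show ?thesis
    unfolding x(1) gsrc_FC using copy_vertex_in_frame_union[OF gsrc_in_gV x(3)] x(2)
    by (simp add: frame_union_contr_def contract_def quotientI)
qed

lemma ginv_FC_in_gE: "x \<in> gE (FC as) \<Longrightarrow> ginv (FC as) x \<in> gE (FC as)"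
  by (erule gE_FC_cases) (simp add: ginv_FC ginv_in_gE)

lemma gsrc_ginv_FC: "x \<in> gE (FC as) \<Longrightarrow> gsrc (FC as) (ginv (FC as) x) = gtgt (FC as) x"
  by (erule gE_FC_cases) (simp add: ginv_FC gsrc_FC gtgt_FC gsrc_ginv)

lemma gsrc_FC_eq_iff:
  assumes pos: "\<forall>a\<in>set as. 0 < a" and e: "e \<in> gE G" "e' \<in> gE G"
    and p: "p \<in> copies as" "p' \<in> copies as"
  shows "gsrc (FC as) (copy_edge e p) = gsrc (FC as) (copy_edge e' p') \<longleftrightarrow>
         gsrc G e = gsrc G e' \<and> glued V0 V1 (gsrc G e) p p'"
proof -
  obtain i j i' j' where ij: "p = (i, j)" "p' = (i', j')" by (cases p; cases p')
  define u u' where "u = gsrc G e" and "u' = gsrc G e'"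
  have u: "u \<in> gV G" "u' \<in> gV G" using e gsrc_in_gV unfolding u_def u'_def by auto
  have i: "i \<in> {1..length as}" "i' \<in> {1..length as}"
    and j: "j \<in> {1..as ! (i - 1)}" "j' \<in> {1..as ! (i' - 1)}"
    using p unfolding ij copies_def by auto
  define c c' where "c = frame_rel G V0 (as ! (i - 1)) `` {(u, j)}"
    and "c' = frame_rel G V0 (as ! (i' - 1)) `` {(u', j')}"
  have in_FU: "(c, i) \<in> gV (frame_union G V0 as)" "(c', i') \<in> gV (frame_union G V0 as)"
    using copy_vertex_in_frame_union[OF u(1) p(1)] copy_vertex_in_frame_union[OF u(2) p(2)]
    unfolding ij c_def c'_def by auto
  have same_member: "c = c' \<longleftrightarrow> u = u' \<and> (u \<in> V0 \<or> j = j')" if "i = i'"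
    using frame_rel_class_eq_iff[OF u j(1)] j that unfolding c_def c'_def by auto
  have at_V1: "c = frame_class G V0 (as ! (i - 1)) v \<longleftrightarrow> u = v"
      "c' = frame_class G V0 (as ! (i' - 1)) v \<longleftrightarrow> u' = v" if "v \<in> V1" for v
  proof -
    have v: "v \<in> gV G" "v \<in> V0" using that V1_subset V0_subset by auto
    show "c = frame_class G V0 (as ! (i - 1)) v \<longleftrightarrow> u = v"
      unfolding c_def by (rule frame_rel_class_eq_frame_class_iff[OF u(1) v j(1)])
    show "c' = frame_class G V0 (as ! (i' - 1)) v \<longleftrightarrow> u' = v"
      unfolding c'_def by (rule frame_rel_class_eq_frame_class_iff[OF u(2) v j(2)])
  qed
  have "gsrc (FC as) (copy_edge e p) = gsrc (FC as) (copy_edge e' p') \<longleftrightarrow>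
        ((c, i), (c', i')) \<in> v1_rel G V0 V1 as"
    unfolding gsrc_FC ij fst_conv snd_conv u_def[symmetric] u'_def[symmetric]
      c_def[symmetric] c'_def[symmetric]
    by (rule eq_equiv_class_iff[OF equiv_v1_rel[OF pos] in_FU])
  also have "\<dots> \<longleftrightarrow> (i = i' \<and> c = c') \<or>
      (\<exists>v\<in>V1. c = frame_class G V0 (as ! (i - 1)) v \<and> c' = frame_class G V0 (as ! (i' - 1)) v)"
    using in_FU unfolding v1_rel_def by auto
  also have "\<dots> \<longleftrightarrow> (i = i' \<and> u = u' \<and> (u \<in> V0 \<or> j = j')) \<or> (u \<in> V1 \<and> u = u')"
    using same_member at_V1 by blast
  also have "\<dots> \<longleftrightarrow> u = u' \<and> glued V0 V1 u p p'"
    unfolding glued_def ij by auto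
  finally show ?thesis unfolding u_def u'_def .
qed

lemma out_edges_FC:
  assumes pos: "\<forall>a\<in>set as. 0 < a" and e0: "e0 \<in> gE G" and p0: "p0 \<in> copies as"
  shows "{x \<in> gE (FC as). gsrc (FC as) x = gsrc (FC as) (copy_edge e0 p0)} =
    (\<lambda>(e, p). copy_edge e p) `
      ({e \<in> gE G. gsrc G e = gsrc G e0} \<times> {p \<in> copies as. glued V0 V1 (gsrc G e0) p0 p})"
    (is "?L = ?R")
proof
  show "?L \<subseteq> ?R"
  proof
    fix x assume "x \<in> ?L"
    then obtain e p where x: "x = copy_edge e p" "e \<in> gE G" "p \<in> copies as"
      and "gsrc (FC as) (copy_edge e0 p0) = gsrc (FC as) (copy_edge e p)"
      by (auto elim: gE_FC_cases)
    then have "gsrc G e0 = gsrc G e \<and> glued V0 V1 (gsrc G e0) p0 p"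
      using gsrc_FC_eq_iff[OF pos e0 x(2) p0 x(3)] by blast
    then show "x \<in> ?R" using x by auto
  qed
  show "?R \<subseteq> ?L"
  proof
    fix x assume "x \<in> ?R"
    then obtain e p where x: "x = copy_edge e p" "e \<in> gE G" "p \<in> copies as"
      "gsrc G e0 = gsrc G e" "glued V0 V1 (gsrc G e0) p0 p"
      by auto
    then have "gsrc (FC as) (copy_edge e0 p0) = gsrc (FC as) (copy_edge e p)"
      using gsrc_FC_eq_iff[OF pos e0 x(2) p0 x(3)] by blast
    then show "x \<in> ?L" using x by simp
  qed
qed

end

section \<open>Transplantations\<close>

definition continuity_preserving ::
    "'v set \<Rightarrow> 'v set \<Rightarrow> nat list \<Rightarrow> nat list \<Rightarrow> ((nat \<times> nat \<Rightarrow> real) \<Rightarrow> nat \<times> nat \<Rightarrow> real) \<Rightarrow> bool"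
  where "continuity_preserving V0 V1 A B T \<longleftrightarrow> (\<forall>u X.
    (\<forall>p\<in>copies A. \<forall>p'\<in>copies A. glued V0 V1 u p p' \<longrightarrow> X p = X p') \<longrightarrow>
    (\<forall>q\<in>copies B. \<forall>q'\<in>copies B. glued V0 V1 u q q' \<longrightarrow> T X q = T X q'))"

definition kirchhoff_preserving ::
    "'v set \<Rightarrow> 'v set \<Rightarrow> nat list \<Rightarrow> nat list \<Rightarrow> ((nat \<times> nat \<Rightarrow> real) \<Rightarrow> nat \<times> nat \<Rightarrow> real) \<Rightarrow> bool"
  where "kirchhoff_preserving V0 V1 A B T \<longleftrightarrow> (\<forall>u Y.
    (\<forall>p\<in>copies A. (\<Sum>p'\<in>{p' \<in> copies A. glued V0 V1 u p p'}. Y p') = 0) \<longrightarrow>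
    (\<forall>q\<in>copies B. (\<Sum>q'\<in>{q' \<in> copies B. glued V0 V1 u q q'}. T Y q') = 0))"

definition injective_on_copies ::
    "nat list \<Rightarrow> nat list \<Rightarrow> ((nat \<times> nat \<Rightarrow> real) \<Rightarrow> nat \<times> nat \<Rightarrow> real) \<Rightarrow> bool"
  where "injective_on_copies A B T \<longleftrightarrow>
    (\<forall>X. (\<forall>q\<in>copies B. T X q = 0) \<longrightarrow> (\<forall>p\<in>copies A. X p = 0))"

definition matrix_apply ::
    "nat list \<Rightarrow> (nat \<times> nat \<Rightarrow> nat \<times> nat \<Rightarrow> real) \<Rightarrow> (nat \<times> nat \<Rightarrow> real) \<Rightarrow> nat \<times> nat \<Rightarrow> real"
  where "matrix_apply A M X q = (\<Sum>p\<in>copies A. M q p * X p)"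

definition transplantation ::
    "'v set \<Rightarrow> 'v set \<Rightarrow> nat list \<Rightarrow> nat list \<Rightarrow> (nat \<times> nat \<Rightarrow> nat \<times> nat \<Rightarrow> real) \<Rightarrow> bool"
  where "transplantation V0 V1 A B M \<longleftrightarrow>
    continuity_preserving V0 V1 A B (matrix_apply A M) \<and>
    kirchhoff_preserving V0 V1 A B (matrix_apply A M) \<and> injective_on_copies A B (matrix_apply A M)"

lemma transplantationI:
  assumes "\<And>X q. q \<in> copies B \<Longrightarrow> T X q = matrix_apply A M X q"
    and "continuity_preserving V0 V1 A B T" "kirchhoff_preserving V0 V1 A B T"
    "injective_on_copies A B T"
  shows "transplantation V0 V1 A B M"
  using assms
  unfolding transplantation_def continuity_preserving_def kirchhoff_preserving_def
    injective_on_copies_def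
  by simp

lemma linear_form_expansion:
  fixes T :: "('p \<Rightarrow> real) \<Rightarrow> real"
  assumes "finite P"
    and linear: "\<And>a b x y. T (\<lambda>p. a * x p + b * y p) = a * T x + b * T y"
    and locality: "\<And>x y. (\<And>p. p \<in> P \<Longrightarrow> x p = y p) \<Longrightarrow> T x = T y"
  shows "T x = (\<Sum>p\<in>P. T (\<lambda>p'. if p' = p then 1 else 0) * x p)"
proof -
  define \<delta> :: "'p \<Rightarrow> 'p \<Rightarrow> real" where "\<delta> = (\<lambda>p p'. if p' = p then 1 else 0)"
  have T_sum: "T (\<lambda>p'. \<Sum>p\<in>S. x p * \<delta> p p') = (\<Sum>p\<in>S. x p * T (\<delta> p))" if "finite S" for S
    using that
  proof (induction S rule: finite_induct)
    case empty
    show ?case using linear[of 0 _ 0 _] by simp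
  next
    case (insert s S)
    then show ?case using linear[of "x s" "\<delta> s" 1] by simp
  qed
  have "x p' = (\<Sum>p\<in>P. x p * \<delta> p p')" if "p' \<in> P" for p'
  proof -
    have "(\<Sum>p\<in>P. x p * \<delta> p p') = (\<Sum>p\<in>P. if p = p' then x p else 0)"
      by (rule sum.cong) (auto simp: \<delta>_def)
    then show ?thesis using that \<open>finite P\<close> by simp
  qed
  then have "T x = T (\<lambda>p'. \<Sum>p\<in>P. x p * \<delta> p p')"
    by (intro locality)
  then show ?thesis using T_sum[OF \<open>finite P\<close>] by (simp add: \<delta>_def mult.commute)
qed

definition block_sum :: "nat list \<Rightarrow> (nat \<times> nat \<Rightarrow> real) \<Rightarrow> nat \<Rightarrow> real" where
  "block_sum A x l = (\<Sum>j\<in>{1..A ! (l - 1)}. x (l, j))"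

definition copies_mean :: "nat list \<Rightarrow> (nat \<times> nat \<Rightarrow> real) \<Rightarrow> real" where
  "copies_mean A x = (\<Sum>p\<in>copies A. x p) / real (sum_list A)"

definition block_dev :: "nat list \<Rightarrow> (nat \<times> nat \<Rightarrow> real) \<Rightarrow> nat \<Rightarrow> real" where
  "block_dev A x l = block_sum A x l / real (A ! (l - 1)) - copies_mean A x"

definition copy_dev :: "nat list \<Rightarrow> (nat \<times> nat \<Rightarrow> real) \<Rightarrow> nat \<times> nat \<Rightarrow> real" where
  "copy_dev A x p = x p - block_sum A x (fst p) / real (A ! (fst p - 1))"

text \<open>Every \<open>x\<close> splits as \<open>x p = copies_mean A x + block_dev A x (fst p) + copy_dev A x p\<close>.
  The transplantation keeps the mean, rescales the block deviations by \<open>a\<^sub>l / b\<^sub>l\<close> (which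
  keeps the block sums \<open>a\<^sub>l * block_dev A x l\<close>), and moves the copy deviations, which sum to
  zero over every block, along \<open>\<sigma>\<close>; the value at the last copy of a block of \<open>B\<close> restores
  the vanishing block sum.\<close>

definition transplant ::
    "nat list \<Rightarrow> nat list \<Rightarrow> (nat \<times> nat \<Rightarrow> nat \<times> nat) \<Rightarrow> (nat \<times> nat \<Rightarrow> real) \<Rightarrow> nat \<times> nat \<Rightarrow> real"
  where "transplant A B \<sigma> x q =
    copies_mean A x + real (A ! (fst q - 1)) / real (B ! (fst q - 1)) * block_dev A x (fst q) +
    (if snd q < B ! (fst q - 1) then copy_dev A x (\<sigma> q)
     else - (\<Sum>k\<in>{1..<B ! (fst q - 1)}. copy_dev A x (\<sigma> (fst q, k))))"

lemma block_sum_linear: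
  "block_sum A (\<lambda>p. a * x p + b * y p) l = a * block_sum A x l + b * block_sum A y l"
  by (simp add: block_sum_def sum.distrib sum_distrib_left)

lemma copies_mean_linear:
  "copies_mean A (\<lambda>p. a * x p + b * y p) = a * copies_mean A x + b * copies_mean A y"
  by (simp add: copies_mean_def sum.distrib sum_distrib_left add_divide_distrib)

lemma block_dev_linear:
  "block_dev A (\<lambda>p. a * x p + b * y p) l = a * block_dev A x l + b * block_dev A y l"
  by (simp add: block_dev_def block_sum_linear copies_mean_linear add_divide_distrib algebra_simps)

lemma copy_dev_linear:
  "copy_dev A (\<lambda>p. a * x p + b * y p) p = a * copy_dev A x p + b * copy_dev A y p"
  by (simp add: copy_dev_def block_sum_linear add_divide_distrib algebra_simps)

lemma transplant_linear:
  "transplant A B \<sigma> (\<lambda>p. a * x p + b * y p) q = a * transplant A B \<sigma> x q + b * transplant A B \<sigma> y q"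
  by (simp add: transplant_def copies_mean_linear block_dev_linear copy_dev_linear sum.distrib
      sum_distrib_left add_divide_distrib algebra_simps)

locale block_bijection =
  fixes A B :: "nat list" and \<sigma> :: "nat \<times> nat \<Rightarrow> nat \<times> nat"
  assumes length_eq: "length B = length A" and sum_list_eq: "sum_list B = sum_list A"
    and pos_A: "\<forall>a\<in>set A. 0 < a" and pos_B: "\<forall>a\<in>set B. 0 < a" and sum_pos: "0 < sum_list A"
    and bij: "bij_betw \<sigma> (inner_copies B) (inner_copies A)"
begin

lemma real_sum_list_nonzero: "real (sum_list A) \<noteq> 0"
  using sum_pos by linarith

lemma A_nth_pos: "l \<in> {1..length A} \<Longrightarrow> 0 < A ! (l - 1)"
  using pos_A by (auto simp: in_set_conv_nth)

lemma B_nth_pos: "l \<in> {1..length A} \<Longrightarrow> 0 < B ! (l - 1)"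
  using pos_B length_eq by (auto simp: in_set_conv_nth)

lemma fst_copies: "p \<in> copies A \<Longrightarrow> fst p \<in> {1..length A}" "q \<in> copies B \<Longrightarrow> fst q \<in> {1..length A}"
  using length_eq by (auto simp: copies_def)

lemma \<sigma>_in_copies: "q \<in> inner_copies B \<Longrightarrow> \<sigma> q \<in> copies A"
  using bij inner_copies_subset unfolding bij_betw_def by auto

lemma inner_copies_B_iff: "q \<in> inner_copies B \<longleftrightarrow> q \<in> copies B \<and> snd q < B ! (fst q - 1)"
  by (auto simp: inner_copies_def copies_def)

lemma first_copy_in_copies: "l \<in> {1..length A} \<Longrightarrow> (l, 1) \<in> copies A"
  using A_nth_pos[of l] by (auto simp: copies_def)

lemma one_one_in_copies: "(1, 1) \<in> copies A"
proof -
  have "1 \<in> {1..length A}" using sum_pos by (cases A) auto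
  then show ?thesis by (rule first_copy_in_copies)
qed

lemma transplant_cong:
  assumes q: "q \<in> copies B" and xy: "\<And>p. p \<in> copies A \<Longrightarrow> x p = y p"
  shows "transplant A B \<sigma> x q = transplant A B \<sigma> y q"
proof -
  have block_sum: "block_sum A x l = block_sum A y l" if "l \<in> {1..length A}" for l
    unfolding block_sum_def using that by (intro sum.cong) (auto simp: xy copies_def)
  have "copies_mean A x = copies_mean A y"
    unfolding copies_mean_def by (simp add: xy)
  moreover have "copy_dev A x p = copy_dev A y p" if "p \<in> copies A" for p
    unfolding copy_dev_def using that by (simp add: xy block_sum[OF fst_copies(1)[OF that]])
  moreover have "(fst q, k) \<in> inner_copies B" if "k \<in> {1..<B ! (fst q - 1)}" for k
    using q that by (auto simp: inner_copies_B_iff copies_def)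
  ultimately show ?thesis
    using q by (simp add: transplant_def block_dev_def block_sum[OF fst_copies(2)[OF q]]
        inner_copies_B_iff \<sigma>_in_copies)
qed

lemma copy_dev_block_sum: "l \<in> {1..length A} \<Longrightarrow> block_sum A (copy_dev A x) l = 0"
  using A_nth_pos[of l]
  by (simp add: block_sum_def copy_dev_def sum_subtractf)

lemma sum_copies_A: "(\<Sum>p\<in>copies A. x p) = (\<Sum>l\<in>{1..length A}. block_sum A x l)"
  unfolding sum_copies block_sum_def ..

lemma sum_copies_B: "(\<Sum>q\<in>copies B. y q) = (\<Sum>l\<in>{1..length A}. block_sum B y l)"
  unfolding sum_copies block_sum_def length_eq ..

lemma sum_A_nth: "(\<Sum>l\<in>{1..length A}. real (A ! (l - 1))) = sum_list A"
  using sum_nth_eq_sum_list[where f = real and as = A] by (simp add: sum_list_of_nat)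

lemma sum_B_nth: "(\<Sum>l\<in>{1..length A}. real (B ! (l - 1))) = sum_list A"
  using sum_nth_eq_sum_list[where f = real and as = B] length_eq sum_list_eq
  by (simp add: sum_list_of_nat)

lemma block_dev_weighted_sum: "(\<Sum>l\<in>{1..length A}. real (A ! (l - 1)) * block_dev A x l) = 0"
proof -
  have "(\<Sum>l\<in>{1..length A}. real (A ! (l - 1)) * block_dev A x l) =
      (\<Sum>l\<in>{1..length A}. block_sum A x l) -
      (\<Sum>l\<in>{1..length A}. real (A ! (l - 1))) * copies_mean A x"
    using A_nth_pos
    by (simp add: block_dev_def algebra_simps sum_subtractf sum_distrib_left)
  also have "\<dots> = 0"
    unfolding sum_A_nth copies_mean_def sum_copies_A[symmetric]
    using real_sum_list_nonzero by simp
  finally show ?thesis .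
qed

lemma block_sum_transplant:
  assumes l: "l \<in> {1..length A}"
  shows "block_sum B (transplant A B \<sigma> x) l =
    real (B ! (l - 1)) * copies_mean A x + real (A ! (l - 1)) * block_dev A x l"
proof -
  define b where "b = B ! (l - 1)"
  have b: "0 < b" using B_nth_pos[OF l] by (simp add: b_def)
  define D where "D k = (if k < b then copy_dev A x (\<sigma> (l, k))
    else - (\<Sum>k\<in>{1..<b}. copy_dev A x (\<sigma> (l, k))))" for k
  have "{1..b} = insert b {1..<b}" using b by auto
  then have "(\<Sum>k\<in>{1..b}. D k) = 0"
    by (simp add: D_def)
  moreover have "transplant A B \<sigma> x (l, k) =
      copies_mean A x + real (A ! (l - 1)) / real b * block_dev A x l + D k" for k
    unfolding transplant_def D_def b_def by simp
  ultimately show ?thesis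
    using b by (simp add: block_sum_def sum.distrib b_def distrib_left)
qed

lemma sum_transplant: "(\<Sum>q\<in>copies B. transplant A B \<sigma> x q) = (\<Sum>p\<in>copies A. x p)"
proof -
  have "(\<Sum>q\<in>copies B. transplant A B \<sigma> x q) =
      (\<Sum>l\<in>{1..length A}. real (B ! (l - 1))) * copies_mean A x +
      (\<Sum>l\<in>{1..length A}. real (A ! (l - 1)) * block_dev A x l)"
    by (simp add: sum_copies_B block_sum_transplant sum.distrib sum_distrib_right)
  also have "\<dots> = (\<Sum>p\<in>copies A. x p)"
    unfolding sum_B_nth block_dev_weighted_sum copies_mean_def
    using real_sum_list_nonzero by simp
  finally show ?thesis .
qed

lemma transplant_block_const:
  fixes X :: "nat \<times> nat \<Rightarrow> real"
  assumes X: "\<forall>p\<in>copies A. X p = c (fst p)" and q: "q \<in> copies B"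
  shows "transplant A B \<sigma> X q =
    copies_mean A X + real (A ! (fst q - 1)) / real (B ! (fst q - 1)) * block_dev A X (fst q)"
proof -
  have dev: "copy_dev A X p = 0" if p: "p \<in> copies A" for p
  proof -
    have "block_sum A X (fst p) = A ! (fst p - 1) * c (fst p)"
      using X fst_copies(1)[OF p] by (simp add: block_sum_def copies_def)
    then show ?thesis
      using X p A_nth_pos[OF fst_copies(1)[OF p]] by (simp add: copy_dev_def)
  qed
  have "(if snd q < B ! (fst q - 1) then copy_dev A X (\<sigma> q)
         else - (\<Sum>k\<in>{1..<B ! (fst q - 1)}. copy_dev A X (\<sigma> (fst q, k)))) = 0"
  proof (cases "snd q < B ! (fst q - 1)")
    case True
    then have "q \<in> inner_copies B" using q by (simp add: inner_copies_B_iff)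
    then show ?thesis using True dev[OF \<sigma>_in_copies] by simp
  next
    case False
    have "copy_dev A X (\<sigma> (fst q, k)) = 0" if "k \<in> {1..<B ! (fst q - 1)}" for k
    proof -
      have "(fst q, k) \<in> inner_copies B" using q that by (auto simp: inner_copies_B_iff copies_def)
      then show ?thesis by (rule dev[OF \<sigma>_in_copies])
    qed
    then show ?thesis using False by simp
  qed
  then show ?thesis unfolding transplant_def by simp
qed

lemma transplant_const:
  fixes X :: "nat \<times> nat \<Rightarrow> real"
  assumes X: "\<forall>p\<in>copies A. X p = c" and q: "q \<in> copies B"
  shows "transplant A B \<sigma> X q = c"
proof -
  have "(\<Sum>p\<in>copies A. X p) = real (sum_list A) * c"
    using X by (simp add: card_copies)
  then have mean: "copies_mean A X = c"
    using real_sum_list_nonzero by (simp add: copies_mean_def)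
  have "block_sum A X l = A ! (l - 1) * c" if "l \<in> {1..length A}" for l
    using X that by (simp add: block_sum_def copies_def)
  then have "block_dev A X (fst q) = 0"
    using A_nth_pos[OF fst_copies(2)[OF q]] fst_copies(2)[OF q] by (simp add: block_dev_def mean)
  then show ?thesis
    using transplant_block_const[where c = "\<lambda>_. c", OF _ q] X mean by simp
qed

lemma transplant_zero: "transplant A B \<sigma> (\<lambda>_. 0) q = 0"
  using transplant_linear[where a = 0 and b = 0] by simp

lemma continuity_preserving_transplant: "continuity_preserving V0 V1 A B (transplant A B \<sigma>)"
  unfolding continuity_preserving_def
proof (intro allI impI ballI)
  fix u and X :: "nat \<times> nat \<Rightarrow> real" and q q'
  assume X: "\<forall>p\<in>copies A. \<forall>p'\<in>copies A. glued V0 V1 u p p' \<longrightarrow> X p = X p'"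
    and q: "q \<in> copies B" "q' \<in> copies B" and glued: "glued V0 V1 u q q'"
  consider (in_V1) "u \<in> V1" | (in_V0) "u \<notin> V1" "u \<in> V0" | (outside) "u \<notin> V1" "u \<notin> V0"
    by blast
  then show "transplant A B \<sigma> X q = transplant A B \<sigma> X q'"
  proof cases
    case in_V1
    have "\<forall>p\<in>copies A. X p = X (1, 1)"
      using X in_V1 one_one_in_copies unfolding glued_def by blast
    then show ?thesis using transplant_const[OF _ q(1)] transplant_const[OF _ q(2)] by simp
  next
    case in_V0
    have block_const: "\<forall>p\<in>copies A. X p = (\<lambda>l. X (l, 1)) (fst p)"
    proof
      fix p assume p: "p \<in> copies A"
      show "X p = (\<lambda>l. X (l, 1)) (fst p)"
        using X[rule_format, OF p first_copy_in_copies[OF fst_copies(1)[OF p]]] in_V0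
        by (simp add: glued_def)
    qed
    have "fst q = fst q'"
      using glued in_V0 by (simp add: glued_def)
    then show ?thesis
      using transplant_block_const[OF block_const q(1)] transplant_block_const[OF block_const q(2)]
      by simp
  next
    case outside
    then show ?thesis using glued by (simp add: glued_def)
  qed
qed

lemma kirchhoff_preserving_transplant: "kirchhoff_preserving V0 V1 A B (transplant A B \<sigma>)"
  unfolding kirchhoff_preserving_def
proof (intro allI impI ballI)
  fix u and Y :: "nat \<times> nat \<Rightarrow> real" and q
  assume Y: "\<forall>p\<in>copies A. (\<Sum>p'\<in>{p' \<in> copies A. glued V0 V1 u p p'}. Y p') = 0"
    and q: "q \<in> copies B"
  consider (in_V1) "u \<in> V1" | (in_V0) "u \<notin> V1" "u \<in> V0" | (outside) "u \<notin> V1" "u \<notin> V0"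
    by blast
  then show "(\<Sum>q'\<in>{q' \<in> copies B. glued V0 V1 u q q'}. transplant A B \<sigma> Y q') = 0"
  proof cases
    case in_V1
    have "(\<Sum>p'\<in>{p' \<in> copies A. glued V0 V1 u (1, 1) p'}. Y p') = 0"
      using Y one_one_in_copies by blast
    then have "(\<Sum>p\<in>copies A. Y p) = 0"
      unfolding glued_class[OF one_one_in_copies] using in_V1 by simp
    then show ?thesis using in_V1 by (simp add: glued_class[OF q] sum_transplant)
  next
    case in_V0
    have block_zero: "block_sum A Y l = 0" if l: "l \<in> {1..length A}" for l
    proof -
      have "(\<Sum>p'\<in>{p' \<in> copies A. glued V0 V1 u (l, 1) p'}. Y p') = 0"
        using Y first_copy_in_copies[OF l] by blast
      then show ?thesis
        unfolding glued_class[OF first_copy_in_copies[OF l]] using in_V0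
        by (simp add: sum_copies_block[OF l] block_sum_def)
    qed
    then have mean: "copies_mean A Y = 0"
      by (simp add: copies_mean_def sum_copies_A)
    have "block_dev A Y (fst q) = 0"
      using block_zero[OF fst_copies(2)[OF q]] mean by (simp add: block_dev_def)
    moreover have "fst q \<in> {1..length B}" using fst_copies(2)[OF q] length_eq by simp
    then have "(\<Sum>q'\<in>{q' \<in> copies B. glued V0 V1 u q q'}. transplant A B \<sigma> Y q') =
        block_sum B (transplant A B \<sigma> Y) (fst q)"
      using in_V0 by (simp add: glued_class[OF q] sum_copies_block block_sum_def)
    ultimately show ?thesis using mean by (simp add: block_sum_transplant[OF fst_copies(2)[OF q]])
  next
    case outside
    then have "Y p = 0" if "p \<in> copies A" for p
      using Y[rule_format, OF that] by (simp add: glued_class[OF that])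
    then have "transplant A B \<sigma> Y q = 0"
      using transplant_cong[OF q, of Y "\<lambda>_. 0"] transplant_zero by simp
    then show ?thesis using outside by (simp add: glued_class[OF q])
  qed
qed

lemma injective_on_copies_transplant: "injective_on_copies A B (transplant A B \<sigma>)"
  unfolding injective_on_copies_def
proof (intro allI impI ballI)
  fix X :: "nat \<times> nat \<Rightarrow> real" and p
  assume zero: "\<forall>q\<in>copies B. transplant A B \<sigma> X q = 0" and p: "p \<in> copies A"
  have "(\<Sum>p\<in>copies A. X p) = 0"
    using zero by (simp add: sum_transplant[symmetric])
  then have mean: "copies_mean A X = 0" by (simp add: copies_mean_def)
  have dev: "block_dev A X l = 0" if l: "l \<in> {1..length A}" for l
  proof -
    have "block_sum B (transplant A B \<sigma> X) l = 0"
      using zero l length_eq by (simp add: block_sum_def copies_def)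
    then show ?thesis using block_sum_transplant[OF l] mean A_nth_pos[OF l] by simp
  qed
  have inner: "copy_dev A X p' = 0" if p': "p' \<in> inner_copies A" for p'
  proof -
    obtain q where q: "q \<in> inner_copies B" "p' = \<sigma> q"
      using p' bij_betw_imp_surj_on[OF bij] by blast
    then have "q \<in> copies B" "snd q < B ! (fst q - 1)" by (simp_all add: inner_copies_B_iff)
    then have "transplant A B \<sigma> X q = copy_dev A X p'"
      using mean dev[OF fst_copies(2)] q(2) by (simp add: transplant_def)
    then show ?thesis using zero \<open>q \<in> copies B\<close> by simp
  qed
  have "copy_dev A X p = 0"
  proof -
    obtain l j where lj: "p = (l, j)" by (cases p)
    have l: "l \<in> {1..length A}" and j: "j \<in> {1..A ! (l - 1)}" using p by (auto simp: lj copies_def)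
    show ?thesis
    proof (cases "j < A ! (l - 1)")
      case True
      then show ?thesis using inner l j by (simp add: lj inner_copies_def)
    next
      case False
      then have last: "j = A ! (l - 1)" using j by simp
      then have "{1..A ! (l - 1)} = insert j {1..<A ! (l - 1)}" using A_nth_pos[OF l] by auto
      then have "0 = copy_dev A X (l, j) + (\<Sum>j'\<in>{1..<A ! (l - 1)}. copy_dev A X (l, j'))"
        using copy_dev_block_sum[OF l, of X] last by (simp add: block_sum_def)
      also have "(\<Sum>j'\<in>{1..<A ! (l - 1)}. copy_dev A X (l, j')) = 0"
        using inner l by (simp add: inner_copies_def)
      finally show ?thesis by (simp add: lj)
    qed
  qed
  then show "X p = 0"
    using mean dev[OF fst_copies(1)[OF p]] A_nth_pos[OF fst_copies(1)[OF p]]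
    by (simp add: copy_dev_def block_dev_def)
qed

lemma ex_transplantation: "\<exists>M. transplantation V0 V1 A B M"
proof -
  define M where "M q p = transplant A B \<sigma> (\<lambda>p'. if p' = p then 1 else 0) q" for q p
  have "transplant A B \<sigma> X q = matrix_apply A M X q" if q: "q \<in> copies B" for X q
    unfolding matrix_apply_def M_def
    by (rule linear_form_expansion) (auto simp: transplant_linear intro: transplant_cong[OF q])
  then have "transplantation V0 V1 A B M"
    using continuity_preserving_transplant kirchhoff_preserving_transplant
      injective_on_copies_transplant
    by (rule transplantationI)
  then show ?thesis by blast
qed

end

section \<open>Transfer of Kirchhoff eigenfunctions\<close>

lemma ex_vertex_values:
  fixes f :: "'x \<Rightarrow> real \<Rightarrow> real"
  assumes flip: "\<And>x. x \<in> E \<Longrightarrow> f (iv x) 0 = f x 1"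
    and iv: "\<And>x. x \<in> E \<Longrightarrow> iv x \<in> E" "\<And>x. x \<in> E \<Longrightarrow> src (iv x) = tgt x"
    and same_src: "\<And>x y. x \<in> E \<Longrightarrow> y \<in> E \<Longrightarrow> src x = src y \<Longrightarrow> f x 0 = f y 0"
  shows "\<exists>\<phi> :: 'v \<Rightarrow> real. \<forall>x\<in>E. f x 0 = \<phi> (src x) \<and> f x 1 = \<phi> (tgt x)"
proof
  define \<phi> where "\<phi> v = f (SOME x. x \<in> E \<and> src x = v) 0" for v
  have at_src: "f x 0 = \<phi> (src x)" if "x \<in> E" for x
  proof -
    have some: "(SOME y. y \<in> E \<and> src y = src x) \<in> E \<and> src (SOME y. y \<in> E \<and> src y = src x) = src x"
      by (rule someI[of _ x]) (use that in simp)
    show ?thesis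
      unfolding \<phi>_def using same_src[OF that conjunct1[OF some] conjunct2[OF some, symmetric]] .
  qed
  show "\<forall>x\<in>E. f x 0 = \<phi> (src x) \<and> f x 1 = \<phi> (tgt x)"
  proof
    fix x assume x: "x \<in> E"
    show "f x 0 = \<phi> (src x) \<and> f x 1 = \<phi> (tgt x)"
      using at_src[OF x] at_src[OF iv(1)[OF x]] flip[OF x] iv(2)[OF x] by simp
  qed
qed

definition transplant_fun ::
    "nat list \<Rightarrow> (nat \<times> nat \<Rightarrow> nat \<times> nat \<Rightarrow> real) \<Rightarrow> (('e \<times> nat) \<times> nat \<Rightarrow> real \<Rightarrow> real) \<Rightarrow>
     ('e \<times> nat) \<times> nat \<Rightarrow> real \<Rightarrow> real"
  where "transplant_fun as M f x t =
    matrix_apply as M (\<lambda>p. f (copy_edge (fst (fst x)) p) t) (snd x, snd (fst x))"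

lemma transplant_fun_copy_edge [simp]:
  "transplant_fun as M f (copy_edge e q) t = (\<Sum>p\<in>copies as. M q p * f (copy_edge e p) t)"
  by (simp add: transplant_fun_def matrix_apply_def copy_edge_def)

context frame_data
begin

lemma sum_out_edges_FC:
  assumes pos: "\<forall>a\<in>set as. 0 < a" and e0: "e0 \<in> gE G" and p0: "p0 \<in> copies as"
  shows "(\<Sum>x\<in>{x \<in> gE (FC as). gsrc (FC as) x = gsrc (FC as) (copy_edge e0 p0)}. F x) =
    (\<Sum>p\<in>{p \<in> copies as. glued V0 V1 (gsrc G e0) p0 p}.
       \<Sum>e\<in>{e \<in> gE G. gsrc G e = gsrc G e0}. F (copy_edge e p))"
proof -
  have "(\<Sum>x\<in>{x \<in> gE (FC as). gsrc (FC as) x = gsrc (FC as) (copy_edge e0 p0)}. F x) =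
    (\<Sum>(e, p)\<in>{e \<in> gE G. gsrc G e = gsrc G e0} \<times> {p \<in> copies as. glued V0 V1 (gsrc G e0) p0 p}.
       F (copy_edge e p))"
    unfolding out_edges_FC[OF pos e0 p0]
    by (subst sum.reindex[OF inj_on_copy_edge]) (simp add: comp_def split_def)
  also have "\<dots> = (\<Sum>e\<in>{e \<in> gE G. gsrc G e = gsrc G e0}.
      \<Sum>p\<in>{p \<in> copies as. glued V0 V1 (gsrc G e0) p0 p}. F (copy_edge e p))"
    by (rule sum.cartesian_product[symmetric])
  finally show ?thesis by (simp only: sum.swap[of _ "{e \<in> gE G. gsrc G e = gsrc G e0}"])
qed

context
  fixes as bs :: "nat list" and M :: "nat \<times> nat \<Rightarrow> nat \<times> nat \<Rightarrow> real"
  assumes pos_as: "\<forall>a\<in>set as. 0 < a" and pos_bs: "\<forall>a\<in>set bs. 0 < a"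
    and transplantation: "transplantation V0 V1 as bs M"
begin

lemma transplant_fun_ginv:
  assumes flip: "\<forall>x\<in>gE (FC as). \<forall>t\<in>{0..1}. f (ginv (FC as) x) t = f x (1 - t)"
  shows "\<forall>x\<in>gE (FC bs). \<forall>t\<in>{0..1}.
    transplant_fun as M f (ginv (FC bs) x) t = transplant_fun as M f x (1 - t)"
proof (intro ballI)
  fix x t assume x: "x \<in> gE (FC bs)" and t: "t \<in> {0..1::real}"
  obtain e q where xq: "x = copy_edge e q" "e \<in> gE G" "q \<in> copies bs"
    using x by (rule gE_FC_cases)
  have "f (copy_edge (ginv G e) p) t = f (copy_edge e p) (1 - t)" if "p \<in> copies as" for p
    using flip[rule_format, of "copy_edge e p" t] that xq(2) t by (simp add: ginv_FC)
  then show "transplant_fun as M f (ginv (FC bs) x) t = transplant_fun as M f x (1 - t)"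
    by (simp add: xq ginv_FC)
qed

lemma transplant_fun_same_src:
  assumes \<phi>: "\<forall>x\<in>gE (FC as). f x 0 = \<phi> (gsrc (FC as) x)"
    and x: "x \<in> gE (FC bs)" and y: "y \<in> gE (FC bs)" and src: "gsrc (FC bs) x = gsrc (FC bs) y"
  shows "transplant_fun as M f x 0 = transplant_fun as M f y 0"
proof -
  obtain e q where xq: "x = copy_edge e q" "e \<in> gE G" "q \<in> copies bs"
    using x by (rule gE_FC_cases)
  obtain e' q' where yq: "y = copy_edge e' q'" "e' \<in> gE G" "q' \<in> copies bs"
    using y by (rule gE_FC_cases)
  have same_src: "gsrc G e = gsrc G e'" and glued: "glued V0 V1 (gsrc G e) q q'"
    using src gsrc_FC_eq_iff[OF pos_bs xq(2) yq(2) xq(3) yq(3)] unfolding xq yq by auto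
  define X where "X p = f (copy_edge e p) 0" for p
  have X_glued: "\<forall>p\<in>copies as. \<forall>p'\<in>copies as. glued V0 V1 (gsrc G e) p p' \<longrightarrow> X p = X p'"
  proof (intro ballI impI)
    fix p p' assume p: "p \<in> copies as" "p' \<in> copies as" and "glued V0 V1 (gsrc G e) p p'"
    then have "gsrc (FC as) (copy_edge e p) = gsrc (FC as) (copy_edge e p')"
      using gsrc_FC_eq_iff[OF pos_as xq(2) xq(2) p] by simp
    then show "X p = X p'" unfolding X_def using \<phi> xq(2) p by simp
  qed
  have X_e': "f (copy_edge e' p) 0 = X p" if p: "p \<in> copies as" for p
  proof -
    have "gsrc (FC as) (copy_edge e' p) = gsrc (FC as) (copy_edge e p)"
      using gsrc_FC_eq_iff[OF pos_as yq(2) xq(2) p p] same_src by (simp add: glued_def)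
    then show ?thesis unfolding X_def using \<phi> xq(2) yq(2) p by simp
  qed
  have continuity: "continuity_preserving V0 V1 as bs (matrix_apply as M)"
    using transplantation by (simp add: transplantation_def)
  have "transplant_fun as M f x 0 = matrix_apply as M X q"
    by (simp add: xq matrix_apply_def X_def)
  also have "\<dots> = matrix_apply as M X q'"
    using continuity X_glued xq(3) yq(3) glued unfolding continuity_preserving_def by blast
  also have "\<dots> = transplant_fun as M f y 0"
    by (simp add: yq matrix_apply_def X_e')
  finally show ?thesis .
qed

lemma transplant_fun_derivatives:
  assumes der: "\<forall>x\<in>gE (FC as). \<forall>t\<in>{0..1}.
      (f x has_real_derivative f1 x t) (at t within {0..1}) \<and>
      (f1 x has_real_derivative f2 x t) (at t within {0..1}) \<and> - f2 x t = lam * f x t"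
  shows "\<forall>x\<in>gE (FC bs). \<forall>t\<in>{0..1}.
      (transplant_fun as M f x has_real_derivative transplant_fun as M f1 x t)
        (at t within {0..1}) \<and>
      (transplant_fun as M f1 x has_real_derivative transplant_fun as M f2 x t)
        (at t within {0..1}) \<and>
      - transplant_fun as M f2 x t = lam * transplant_fun as M f x t"
proof (intro ballI conjI)
  fix x t assume x: "x \<in> gE (FC bs)" and t: "t \<in> {0..(1::real)}"
  obtain e q where xq: "x = copy_edge e q" "e \<in> gE G" "q \<in> copies bs"
    using x by (rule gE_FC_cases)
  have d: "(f (copy_edge e p) has_real_derivative f1 (copy_edge e p) t) (at t within {0..1})"
    "(f1 (copy_edge e p) has_real_derivative f2 (copy_edge e p) t) (at t within {0..1})"
    "- f2 (copy_edge e p) t = lam * f (copy_edge e p) t" if "p \<in> copies as" for p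
    using der xq(2) that t by auto
  have expand: "transplant_fun as M g x = (\<lambda>t. \<Sum>p\<in>copies as. M q p * g (copy_edge e p) t)" for g
    by (simp add: xq fun_eq_iff)
  show "(transplant_fun as M f x has_real_derivative transplant_fun as M f1 x t)
      (at t within {0..1})"
    unfolding expand by (intro DERIV_sum DERIV_cmult d)
  show "(transplant_fun as M f1 x has_real_derivative transplant_fun as M f2 x t)
      (at t within {0..1})"
    unfolding expand by (intro DERIV_sum DERIV_cmult d)
  have "(\<Sum>p\<in>copies as. M q p * (- f2 (copy_edge e p) t)) =
      (\<Sum>p\<in>copies as. lam * (M q p * f (copy_edge e p) t))"
    by (rule sum.cong) (simp_all add: d(3))
  then show "- transplant_fun as M f2 x t = lam * transplant_fun as M f x t"
    by (simp add: xq sum_negf sum_distrib_left)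
qed

lemma transplant_fun_kirchhoff:
  assumes kir: "\<forall>v\<in>gV (FC as). (\<Sum>x\<in>{x \<in> gE (FC as). gsrc (FC as) x = v}. df x 0) = 0"
  shows "\<forall>v\<in>gV (FC bs). (\<Sum>y\<in>{y \<in> gE (FC bs). gsrc (FC bs) y = v}. transplant_fun as M df y 0) = 0"
proof
  fix v assume v: "v \<in> gV (FC bs)"
  show "(\<Sum>y\<in>{y \<in> gE (FC bs). gsrc (FC bs) y = v}. transplant_fun as M df y 0) = 0"
  proof (cases "\<exists>x\<in>gE (FC bs). gsrc (FC bs) x = v")
    case False
    then have no_edges: "{y \<in> gE (FC bs). gsrc (FC bs) y = v} = {}" by blast
    show ?thesis unfolding no_edges by simp
  next
    case True
    then obtain e0 q0 where x0: "e0 \<in> gE G" "q0 \<in> copies bs" "gsrc (FC bs) (copy_edge e0 q0) = v"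
      by (auto elim: gE_FC_cases)
    define S where "S = {e \<in> gE G. gsrc G e = gsrc G e0}"
    define Y where "Y p = (\<Sum>e\<in>S. df (copy_edge e p) 0)" for p
    have "(\<Sum>y\<in>{y \<in> gE (FC bs). gsrc (FC bs) y = v}. transplant_fun as M df y 0) =
        (\<Sum>q\<in>{q \<in> copies bs. glued V0 V1 (gsrc G e0) q0 q}.
          \<Sum>e\<in>S. transplant_fun as M df (copy_edge e q) 0)"
      unfolding x0(3)[symmetric] S_def by (rule sum_out_edges_FC[OF pos_bs x0(1,2)])
    also have "\<dots> = (\<Sum>q\<in>{q \<in> copies bs. glued V0 V1 (gsrc G e0) q0 q}. matrix_apply as M Y q)"
      unfolding transplant_fun_copy_edge Y_def matrix_apply_def
      by (rule sum.cong[OF refl], subst sum.swap) (simp add: sum_distrib_left)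
    also have "\<dots> = 0"
    proof -
      have "(\<Sum>p'\<in>{p' \<in> copies as. glued V0 V1 (gsrc G e0) p p'}. Y p') = 0"
        if p: "p \<in> copies as" for p
      proof -
        have "(\<Sum>p'\<in>{p' \<in> copies as. glued V0 V1 (gsrc G e0) p p'}. Y p') =
            (\<Sum>x\<in>{x \<in> gE (FC as). gsrc (FC as) x = gsrc (FC as) (copy_edge e0 p)}. df x 0)"
          unfolding Y_def S_def by (rule sum_out_edges_FC[OF pos_as x0(1) p, symmetric])
        also have "\<dots> = 0"
          using kir gsrc_FC_in_gV[of "copy_edge e0 p" as] x0(1) p by simp
        finally show ?thesis .
      qed
      moreover have "kirchhoff_preserving V0 V1 as bs (matrix_apply as M)"
        using transplantation by (simp add: transplantation_def)
      ultimately show ?thesis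
        using x0(2) unfolding kirchhoff_preserving_def by blast
    qed
    finally show ?thesis .
  qed
qed

lemma kirchhoff_eigenfun_transplant_fun:
  assumes "kirchhoff_eigenfun (FC as) lam f"
  shows "kirchhoff_eigenfun (FC bs) lam (transplant_fun as M f)"
proof -
  obtain \<phi> f1 f2 where flip: "\<forall>x\<in>gE (FC as). \<forall>t\<in>{0..1}. f (ginv (FC as) x) t = f x (1 - t)"
    and \<phi>: "\<forall>x\<in>gE (FC as). f x 0 = \<phi> (gsrc (FC as) x) \<and> f x 1 = \<phi> (gtgt (FC as) x)"
    and der: "\<forall>x\<in>gE (FC as). \<forall>t\<in>{0..1}.
      (f x has_real_derivative f1 x t) (at t within {0..1}) \<and>
      (f1 x has_real_derivative f2 x t) (at t within {0..1}) \<and> - f2 x t = lam * f x t"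
    and kir: "\<forall>v\<in>gV (FC as). (\<Sum>x\<in>{x \<in> gE (FC as). gsrc (FC as) x = v}. f1 x 0) = 0"
    using assms unfolding kirchhoff_eigenfun_def by blast
  have flip_bs: "\<forall>x\<in>gE (FC bs). \<forall>t\<in>{0..1}.
      transplant_fun as M f (ginv (FC bs) x) t = transplant_fun as M f x (1 - t)"
    using flip by (rule transplant_fun_ginv)
  have "\<exists>\<psi>. \<forall>x\<in>gE (FC bs).
      transplant_fun as M f x 0 = \<psi> (gsrc (FC bs) x) \<and>
      transplant_fun as M f x 1 = \<psi> (gtgt (FC bs) x)"
  proof (rule ex_vertex_values)
    show "transplant_fun as M f (ginv (FC bs) x) 0 = transplant_fun as M f x 1"
      if "x \<in> gE (FC bs)" for x
      using flip_bs that by simp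
    show "transplant_fun as M f x 0 = transplant_fun as M f y 0"
      if "x \<in> gE (FC bs)" "y \<in> gE (FC bs)" "gsrc (FC bs) x = gsrc (FC bs) y" for x y
      using \<phi> that by (intro transplant_fun_same_src) auto
  qed (simp_all add: ginv_FC_in_gE gsrc_ginv_FC)
  then show ?thesis
    unfolding kirchhoff_eigenfun_def
    using flip_bs transplant_fun_derivatives[OF der]
      transplant_fun_kirchhoff[where df = f1, OF kir] by blast
qed

lemma kirchhoff_mult_ge_transfer:
  assumes "kirchhoff_mult_ge (FC as) lam n"
  shows "kirchhoff_mult_ge (FC bs) lam n"
proof -
  obtain fs where eig: "\<forall>i<n. kirchhoff_eigenfun (FC as) lam (fs i)"
    and indep: "\<forall>c. (\<forall>x\<in>gE (FC as). \<forall>t\<in>{0..1}. (\<Sum>i<n. c i * fs i x t) = 0) \<longrightarrow> (\<forall>i<n. c i = 0)"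
    using assms unfolding kirchhoff_mult_ge_def by blast
  have injective: "injective_on_copies as bs (matrix_apply as M)"
    using transplantation by (simp add: transplantation_def)
  have "\<forall>x\<in>gE (FC as). \<forall>t\<in>{0..1}. (\<Sum>i<n. c i * fs i x t) = 0"
    if zero: "\<forall>y\<in>gE (FC bs). \<forall>t\<in>{0..1}. (\<Sum>i<n. c i * transplant_fun as M (fs i) y t) = 0" for c
  proof (intro ballI)
    fix x t assume x: "x \<in> gE (FC as)" and t: "t \<in> {0..(1::real)}"
    obtain e p where xp: "x = copy_edge e p" "e \<in> gE G" "p \<in> copies as"
      using x by (rule gE_FC_cases)
    define Z where "Z p' = (\<Sum>i<n. c i * fs i (copy_edge e p') t)" for p'
    have Z_eq: "matrix_apply as M Z q = (\<Sum>i<n. c i * transplant_fun as M (fs i) (copy_edge e q) t)"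
      for q
      unfolding Z_def matrix_apply_def transplant_fun_copy_edge sum_distrib_left
      by (subst sum.swap) (simp add: algebra_simps)
    have "\<forall>q\<in>copies bs. matrix_apply as M Z q = 0"
    proof
      fix q assume "q \<in> copies bs"
      then have "copy_edge e q \<in> gE (FC bs)" using xp(2) by simp
      then show "matrix_apply as M Z q = 0" unfolding Z_eq using zero t by blast
    qed
    then have "Z p = 0"
      using injective xp(3) unfolding injective_on_copies_def by blast
    then show "(\<Sum>i<n. c i * fs i x t) = 0"
      by (simp add: xp(1) Z_def)
  qed
  then show ?thesis
    unfolding kirchhoff_mult_ge_def
    using eig indep kirchhoff_eigenfun_transplant_fun
    by (intro exI[of _ "\<lambda>i. transplant_fun as M (fs i)"]) blast
qed

end

end

section \<open>Counting edges by the degree of their source\<close>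

definition out_degree :: "('v, 'e) dgraph \<Rightarrow> 'v \<Rightarrow> nat" where
  "out_degree H v = card {x \<in> gE H. gsrc H x = v}"

definition edges_at_degree :: "('v, 'e) dgraph \<Rightarrow> nat \<Rightarrow> nat" where
  "edges_at_degree H d = card {x \<in> gE H. out_degree H (gsrc H x) = d}"

lemma filter_image_eq:
  assumes "f ` A = B" and "\<And>x. x \<in> A \<Longrightarrow> P (f x) \<longleftrightarrow> Q x"
  shows "{y \<in> B. P y} = f ` {x \<in> A. Q x}"
  using assms by auto

lemma edges_at_degree_eq_if_iso:
  assumes iso: "metric_graph_iso H1 H2" and src: "\<forall>x\<in>gE H1. gsrc H1 x \<in> gV H1"
  shows "edges_at_degree H1 d = edges_at_degree H2 d"
proof -
  obtain \<phi> \<psi> where \<phi>: "bij_betw \<phi> (gV H1) (gV H2)" and \<psi>: "bij_betw \<psi> (gE H1) (gE H2)"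
    and hom: "\<forall>x\<in>gE H1. gsrc H2 (\<psi> x) = \<phi> (gsrc H1 x)"
    using iso unfolding metric_graph_iso_def by blast
  have inj_\<psi>: "inj_on \<psi> (gE H1)" and img_\<psi>: "\<psi> ` gE H1 = gE H2"
    using \<psi> unfolding bij_betw_def by auto
  have inj_\<phi>: "inj_on \<phi> (gV H1)" using \<phi> unfolding bij_betw_def by auto
  have out_edges: "{y \<in> gE H2. gsrc H2 y = \<phi> v} = \<psi> ` {x \<in> gE H1. gsrc H1 x = v}"
    if v: "v \<in> gV H1" for v
  proof -
    have "gsrc H2 (\<psi> x) = \<phi> v \<longleftrightarrow> gsrc H1 x = v" if "x \<in> gE H1" for x
      using inj_\<phi> src that v hom unfolding inj_on_def by auto
    then show ?thesis by (rule filter_image_eq[OF img_\<psi>])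
  qed
  have degree: "out_degree H2 (\<phi> v) = out_degree H1 v" if "v \<in> gV H1" for v
    unfolding out_degree_def out_edges[OF that]
    by (rule card_image) (rule inj_on_subset[OF inj_\<psi>], auto)
  have "{y \<in> gE H2. out_degree H2 (gsrc H2 y) = d} = \<psi> ` {x \<in> gE H1. out_degree H1 (gsrc H1 x) = d}"
    using hom degree src by (intro filter_image_eq[OF img_\<psi>]) auto
  then show ?thesis
    unfolding edges_at_degree_def by (simp add: card_image inj_on_subset[OF inj_\<psi>])
qed

lemma sum_mset_split_at:
  fixes A :: "nat multiset" and g :: "nat \<Rightarrow> nat"
  assumes "\<And>a. a < m \<Longrightarrow> g a = 0"
  shows "(\<Sum>a\<in>#A. g a) = (\<Sum>a\<in>#{#a \<in># A. m < a#}. g a) + count A m * g m"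
  using assms by (induction A) (auto simp: not_less_iff_gr_or_eq)

text \<open>Compare the sums at a test \<open>d\<close> for the largest part whose multiplicities differ.\<close>

lemma multiset_eq_if_weighted_sums_eq:
  fixes A B :: "nat multiset" and h :: "'d \<Rightarrow> nat \<Rightarrow> nat"
  assumes pos: "\<forall>a\<in>#A + B. 0 < a"
    and test: "\<And>m. 0 < m \<Longrightarrow> \<exists>d. 0 < h d m \<and> (\<forall>a. 0 < a \<longrightarrow> a < m \<longrightarrow> h d a = 0)"
    and sums: "\<And>d. (\<Sum>a\<in>#A. a * h d a) = (\<Sum>a\<in>#B. a * h d a)"
  shows "A = B"
proof (rule ccontr)
  assume "A \<noteq> B"
  define S where "S = {a. count A a \<noteq> count B a}"
  have "S \<subseteq> set_mset (A + B)" by (auto simp: S_def count_eq_zero_iff[symmetric])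
  then have "finite S" by (rule finite_subset) simp
  moreover have "S \<noteq> {}" using \<open>A \<noteq> B\<close> by (auto simp: S_def multiset_eq_iff)
  ultimately have m: "Max S \<in> S" by (rule Max_in)
  have above: "count A a = count B a" if "Max S < a" for a
    using Max_ge[OF \<open>finite S\<close>, of a] that by (auto simp: S_def)
  define m where "m = Max S"
  have "0 < m" using m pos \<open>S \<subseteq> set_mset (A + B)\<close> unfolding m_def by blast
  then obtain d where hm: "0 < h d m" and below: "\<And>a. 0 < a \<Longrightarrow> a < m \<Longrightarrow> h d a = 0"
    using test by blast
  have below': "a * h d a = 0" if "a < m" for a
    using below[of a] that by (cases "a = 0") auto
  have "{#a \<in># A. m < a#} = {#a \<in># B. m < a#}"
    using above by (intro multiset_eqI) (simp add: m_def)
  moreover have "(\<Sum>a\<in>#A. a * h d a) = (\<Sum>a\<in>#{#a \<in># A. m < a#}. a * h d a) + count A m * (m * h d m)"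
    "(\<Sum>a\<in>#B. a * h d a) = (\<Sum>a\<in>#{#a \<in># B. m < a#}. a * h d a) + count B m * (m * h d m)"
    by (rule sum_mset_split_at, erule below')+
  ultimately have "count A m * (m * h d m) = count B m * (m * h d m)"
    using sums[of d] by (metis add_left_cancel)
  then show False using m hm \<open>0 < m\<close> by (simp add: S_def m_def)
qed

context frame_data
begin

text \<open>The number of copies of the vertex \<open>u\<close> that are merged into the vertex of \<open>F\<^sub>A\<^sub>,\<^sub>V\<^sub>1\<close>
  containing a copy of \<open>u\<close> from a frame member \<open>F\<^sub>a\<close>, where \<open>r = \<Sum>A\<close>.\<close>

definition glued_copies :: "nat \<Rightarrow> 'v \<Rightarrow> nat \<Rightarrow> nat" where
  "glued_copies r u a = (if u \<in> V1 then r else if u \<in> V0 then a else 1)"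

definition member_edge_count :: "nat \<Rightarrow> nat \<Rightarrow> nat" where
  "member_edge_count d a = card {e \<in> gE G. gsrc G e \<in> V0 - V1 \<and> out_degree G (gsrc G e) * a = d}"

definition fixed_edge_count :: "nat \<Rightarrow> nat \<Rightarrow> nat" where
  "fixed_edge_count r d =
    card {e \<in> gE G. gsrc G e \<notin> V0 - V1 \<and> out_degree G (gsrc G e) * glued_copies r (gsrc G e) 0 = d}"

lemma card_glued_class:
  assumes p: "p \<in> copies L"
  shows "card {p' \<in> copies L. glued V0 V1 u p p'} = glued_copies (sum_list L) u (L ! (fst p - 1))"
proof -
  have l: "fst p \<in> {1..length L}" using p by (auto simp: copies_def)
  have "card {p' \<in> copies L. fst p' = fst p} = L ! (fst p - 1)"
    unfolding card_eq_sum sum_copies_block[OF l] by simp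
  then show ?thesis
    using p by (simp add: glued_class glued_copies_def card_copies)
qed

lemma out_degree_FC:
  assumes pos: "\<forall>a\<in>set L. 0 < a" and e: "e \<in> gE G" and p: "p \<in> copies L"
  shows "out_degree (FC L) (gsrc (FC L) (copy_edge e p)) =
    out_degree G (gsrc G e) * glued_copies (sum_list L) (gsrc G e) (L ! (fst p - 1))"
  unfolding out_degree_def out_edges_FC[OF pos e p] card_image[OF inj_on_copy_edge]
  by (simp add: card_cartesian_product card_glued_class[OF p])

lemma edges_at_degree_FC:
  assumes pos: "\<forall>a\<in>set L. 0 < a"
  shows "edges_at_degree (FC L) d =
    sum_list (map (\<lambda>a. a * member_edge_count d a) L) + fixed_edge_count (sum_list L) d * sum_list L"
proof -
  define r where "r = sum_list L"
  define E where "E a = {e \<in> gE G. out_degree G (gsrc G e) * glued_copies r (gsrc G e) a = d}" for a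
  have card_E: "card (E a) = member_edge_count d a + fixed_edge_count r d" for a
  proof -
    have "E a = {e \<in> gE G. gsrc G e \<in> V0 - V1 \<and> out_degree G (gsrc G e) * a = d} \<union>
        {e \<in> gE G. gsrc G e \<notin> V0 - V1 \<and> out_degree G (gsrc G e) * glued_copies r (gsrc G e) 0 = d}"
      using V1_subset by (auto simp: E_def glued_copies_def)
    then show ?thesis
      unfolding member_edge_count_def fixed_edge_count_def
      by (simp add: card_Un_disjoint finite_gE disjoint_iff)
  qed
  have edges_eq: "{x \<in> gE (FC L). out_degree (FC L) (gsrc (FC L) x) = d} =
      (\<lambda>(p, e). copy_edge e p) ` (SIGMA p:copies L. E (L ! (fst p - 1)))"
    by (force simp: E_def gE_FC out_degree_FC[OF pos] r_def image_iff)
  have inj: "inj_on (\<lambda>(p, e). copy_edge e p) X" for X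
    by (auto simp: inj_on_def)
  have "edges_at_degree (FC L) d = card (SIGMA p:copies L. E (L ! (fst p - 1)))"
    unfolding edges_at_degree_def edges_eq by (rule card_image[OF inj])
  also have "\<dots> = (\<Sum>p\<in>copies L. card (E (L ! (fst p - 1))))"
    by (simp add: card_SigmaI finite_gE E_def)
  also have "\<dots> = (\<Sum>i\<in>{1..length L}. L ! (i - 1) * card (E (L ! (i - 1))))"
    by (simp add: sum_copies)
  also have "\<dots> = sum_list (map (\<lambda>a. a * card (E a)) L)"
    by (rule sum_nth_eq_sum_list)
  also have "\<dots> =
      sum_list (map (\<lambda>a. a * member_edge_count d a) L) + fixed_edge_count r d * sum_list L"
    unfolding card_E by (induction L) (simp_all add: algebra_simps)
  finally show ?thesis unfolding r_def .
qed

lemma member_edge_count_test: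
  assumes strict: "V1 \<subset> V0" and m: "0 < m"
  shows "\<exists>d. 0 < member_edge_count d m \<and> (\<forall>a. 0 < a \<longrightarrow> a < m \<longrightarrow> member_edge_count d a = 0)"
proof -
  define W where "W = V0 - V1"
  have "W \<noteq> {}" using strict by (auto simp: W_def)
  moreover have "finite W"
    using V0_subset dgraph finite_subset unfolding W_def is_dgraph_def by blast
  ultimately obtain w where w: "w \<in> W" and w_max: "\<And>u. u \<in> W \<Longrightarrow> out_degree G u \<le> out_degree G w"
    using Max_in[of "out_degree G ` W"] Max_ge[of "out_degree G ` W"] by fastforce
  obtain e where e: "e \<in> gE G" "gsrc G e = w"
    using dgraph w V0_subset unfolding is_dgraph_def W_def by blast
  have "0 < out_degree G w"
    using e finite_gE unfolding out_degree_def by (auto simp: card_gt_0_iff)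
  define d where "d = out_degree G w * m"
  have "e \<in> {e \<in> gE G. gsrc G e \<in> V0 - V1 \<and> out_degree G (gsrc G e) * m = d}"
    using e w by (simp add: d_def W_def)
  then have "0 < member_edge_count d m"
    unfolding member_edge_count_def using finite_gE by (auto simp: card_gt_0_iff)
  moreover have "member_edge_count d a = 0" if "0 < a" "a < m" for a
  proof -
    have small: "out_degree G u * a < d" if "u \<in> W" for u
      using w_max[OF that] \<open>0 < out_degree G w\<close> \<open>a < m\<close>
      by (simp add: d_def) (meson le_less_trans mult_le_mono1 mult_less_mono2)
    have "{e \<in> gE G. gsrc G e \<in> V0 - V1 \<and> out_degree G (gsrc G e) * a = d} = {}"
      using small unfolding W_def by force
    then show ?thesis
      unfolding member_edge_count_def by (simp only: card.empty)
  qed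
  ultimately show ?thesis by blast
qed

lemma not_metric_graph_iso_FC:
  assumes strict: "V1 \<subset> V0" and pos_as: "\<forall>a\<in>set as. 0 < a" and pos_bs: "\<forall>a\<in>set bs. 0 < a"
    and sums: "sum_list as = sum_list bs" and "mset as \<noteq> mset bs"
  shows "\<not> metric_graph_iso (FC as) (FC bs)"
proof
  assume iso: "metric_graph_iso (FC as) (FC bs)"
  have "edges_at_degree (FC as) d = edges_at_degree (FC bs) d" for d
    using edges_at_degree_eq_if_iso[OF iso] gsrc_FC_in_gV by blast
  then have weighted_sums:
    "(\<Sum>a\<in>#mset as. a * member_edge_count d a) = (\<Sum>a\<in>#mset bs. a * member_edge_count d a)" for d
    using edges_at_degree_FC[OF pos_as, of d] edges_at_degree_FC[OF pos_bs, of d] sums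
    by (simp add: sum_mset_sum_list flip: mset_map)
  have "\<forall>a\<in>#mset as + mset bs. 0 < a"
    using pos_as pos_bs by auto
  then have "mset as = mset bs"
    using member_edge_count_test[OF strict] weighted_sums by (rule multiset_eq_if_weighted_sums_eq)
  then show False using \<open>mset as \<noteq> mset bs\<close> by contradiction
qed

lemma metric_isospectral_FC:
  assumes lengths: "length as = length bs" and sums: "sum_list as = sum_list bs"
    and pos_as: "\<forall>a\<in>set as. 0 < a" and pos_bs: "\<forall>a\<in>set bs. 0 < a" and "0 < sum_list as"
  shows "metric_isospectral (FC as) (FC bs)"
proof -
  have "card (inner_copies bs) = card (inner_copies as)"
    using card_inner_copies[OF pos_as] card_inner_copies[OF pos_bs] lengths sums by simp
  moreover have "finite (inner_copies as)" "finite (inner_copies bs)"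
    using finite_subset[OF inner_copies_subset finite_copies] by auto
  ultimately obtain \<sigma> \<tau> where "bij_betw \<sigma> (inner_copies bs) (inner_copies as)"
    and "bij_betw \<tau> (inner_copies as) (inner_copies bs)"
    by (metis finite_same_card_bij)
  then have "block_bijection as bs \<sigma>" "block_bijection bs as \<tau>"
    using assms by (simp_all add: block_bijection_def)
  then obtain M N where "transplantation V0 V1 as bs M" "transplantation V0 V1 bs as N"
    using block_bijection.ex_transplantation by metis
  then show ?thesis
    unfolding metric_isospectral_def
    using kirchhoff_mult_ge_transfer[OF pos_as pos_bs] kirchhoff_mult_ge_transfer[OF pos_bs pos_as]
    by blast
qed

end

theorem corollary5p9:
  fixes G :: "('v, 'e) dgraph" and V0 V1 :: "'v set" and r s :: nat and as bs :: "nat list"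
  assumes "is_dgraph G"
    and "V0 \<subseteq> gV G"
    and "V1 \<subset> V0"
    and "r \<ge> 4"
    and "is_s_partition s r as" and "is_s_partition s r bs"
    and "mset as \<noteq> mset bs"
  shows "metric_isospectral (frame_union_contr G V0 V1 as) (frame_union_contr G V0 V1 bs) \<and>
         \<not> metric_graph_iso (frame_union_contr G V0 V1 as) (frame_union_contr G V0 V1 bs)"
proof -
  interpret frame_data G V0 V1
    using assms(1-3) by unfold_locales auto
  have "length as = length bs" "sum_list as = sum_list bs" "0 < sum_list as"
    and "\<forall>a\<in>set as. 0 < a" "\<forall>a\<in>set bs. 0 < a"
    using assms(4-6) by (auto simp: is_s_partition_def)
  then show ?thesis
    using metric_isospectral_FC not_metric_graph_iso_FC assms(3,7) by blast
qed

end
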